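(* Let $0<r_i<r_o$, $0<h<H$, $n>0$, $p>0$, let $a_r$, $\boldsymbol\sigma^0$ and $c=3^{\frac{n-1}{2}}a_r|a_r|^{n-1}n^{-n}$ be as in the context, and let $\boldsymbol C(r)$ be the compliance matrix defined in the context. Let $\boldsymbol\sigma^-=(\sigma^-_r,\sigma^-_\theta,\sigma^-_z,\sigma^-_{rz})$ be a continuously differentiable axisymmetric stress field on $\Omega^-=[r_i,r_o]\times[0,h]$ and $\boldsymbol\sigma^+$ one on $\Omega^+=[r_i,r_o]\times[h,H]$, each satisfying the axisymmetric equilibrium equations on its domain, with $\sigma^\pm_r=\sigma^\pm_{rz}=0$ at $r=r_i$ and $r=r_o$, $\sigma^-_{rz}=0$ at $z=0$, and $\sigma^+_{rz}=0$ at $z=H$. Suppose there are continuously differentiable displacement fields $u^\pm=(u^\pm_r,u^\pm_z)$ on $\Omega^\pm$ such that the strains $$\varepsilon_r=\frac{\partial u_r}{\partial r},\ \varepsilon_\theta=\frac{u_r}{r},\ \varepsilon_z=\frac{\partial u_z}{\partial z},\ \varepsilon_{rz}=\frac12\Big(\frac{\partial u_r}{\partial z}+\frac{\partial u_z}{\partial r}\Big)$$ computed from $u^\pm$ satisfy $(\varepsilon_r,\varepsilon_\theta,\varepsilon_z,2\varepsilon_{rz})^T=\boldsymbol C(r)\,(\sigma^\pm_r,\sigma^\pm_\theta,\sigma^\pm_z,\sigma^\pm_{rz})^T$ on $\Omega^\pm$, with $u^-_z=0$ at $z=0$ and $u^+_z=0$ at $z=H$, and that at the interface $z=h$, for all $r\in[r_i,r_o]$,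 $$\sigma^+_{rz}=\sigma^-_{rz},\quad \sigma^+_z=\sigma^-_z,\quad u^+_z=u^-_z,\quad u^+_r-u^-_r=\frac{c}{r}.$$ Define $\boldsymbol\sigma^1=\boldsymbol\sigma^-$ on $\{z<h\}$ and $\boldsymbol\sigma^1=\boldsymbol\sigma^+$ on $\{z\ge h\}$. Then for every admissible virtual stress field $\delta\boldsymbol\sigma$, $$\int_{r_i}^{r_o}\!\!\int_0^H(\vec{\boldsymbol\sigma}^1)^T\boldsymbol C(r)\,\vec{\delta\boldsymbol\sigma}\;r\,dz\,dr=\int_{r_i}^{r_o}\!\!\int_0^h\dot{\boldsymbol\varepsilon}(\boldsymbol\sigma^0):\delta\boldsymbol\sigma\;r\,dz\,dr,$$ where $\vec{\boldsymbol\sigma}=(\sigma_r,\sigma_\theta,\sigma_z,\sigma_{rz})^T$; i.e. $\boldsymbol\sigma^1$ solves the first-order perturbation equation of the steady-state creep problem for the two-material pipe.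
   Context: Setting: steady-state creep of a pressurized pipe occupying $r_i\le r\le r_o$, $0\le z\le H$, with Norton's law $\dot{\boldsymbol\varepsilon}=A\,\boldsymbol s\,(\sigma_{vM})^{n-1}$, $\boldsymbol s=\boldsymbol\sigma-\frac13\mathrm{tr}(\boldsymbol\sigma)\boldsymbol I$, $\sigma_{vM}=\sqrt{\frac32\boldsymbol s:\boldsymbol s}$, where $A=1$ for $z\ge h$ and $A=1-s$ for $z<h$; the first-order perturbation $\boldsymbol\sigma^1=\frac{d\boldsymbol\sigma(s)}{ds}|_{s=0}$ is characterized by the linear variational equation in the conclusion. Write $\dot{\boldsymbol\varepsilon}(\boldsymbol\sigma)=\boldsymbol s(\sigma_{vM})^{n-1}$ (the $A=1$ law). The unperturbed (homogeneous pipe, $s=0$) solution is $\sigma^0_r=a+a_r r^{-2/n}$, $\sigma^0_\theta=a+a_\theta r^{-2/n}$, $\sigma^0_z=a+a_z r^{-2/n}$, $\sigma^0_{rz}=0$ with $a=p\,r_i^{2/n}/(r_o^{2/n}-r_i^{2/n})$, $a_r=-p\,r_i^{2/n}r_o^{2/n}/(r_o^{2/n}-r_i^{2/n})$, $a_\theta=\frac{n-2}{n}a_r$, $a_z=\frac{n-1}{n}a_r$. Axisymmetric stress fields have components $\sigma_r,\sigma_\theta,\sigma_z,\sigma_{rz}$ depending on $(r,z)$; the axisymmetric equilibrium equations are $\partial_r\sigma_r+\frac1r(\sigma_r-\sigma_\theta)+\partial_z\sigma_{rz}=0$ and $\partial_r\sigma_{rz}+\frac1r\sigma_{rz}+\partial_z\sigma_z=0$.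 An admissible virtual stress field is a continuously differentiable axisymmetric field on $[r_i,r_o]\times[0,H]$ satisfying these equilibrium equations and $\sigma_r=\sigma_{rz}=0$ at $r=r_i,r_o$, $\sigma_{rz}=0$ at $z=0,H$. The compliance matrix $\boldsymbol C(r)$ is the $4\times4$ Jacobian $\partial\vec{\dot{\boldsymbol\varepsilon}}/\partial\vec{\boldsymbol\sigma}$ evaluated at $\boldsymbol\sigma^0(r)$, where $\vec{\dot{\boldsymbol\varepsilon}}=(\dot\varepsilon_r,\dot\varepsilon_\theta,\dot\varepsilon_z,2\dot\varepsilon_{rz})^T$ is regarded as a function of $\vec{\boldsymbol\sigma}=(\sigma_r,\sigma_\theta,\sigma_z,\sigma_{rz})^T$ via $\dot{\boldsymbol\varepsilon}(\boldsymbol\sigma)=\boldsymbol s(\sigma_{vM})^{n-1}$. Also $\boldsymbol\varepsilon:\boldsymbol\sigma=\varepsilon_r\sigma_r+\varepsilon_\theta\sigma_\theta+\varepsilon_z\sigma_z+2\varepsilon_{rz}\sigma_{rz}$. *)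

theory Defs
  imports "HOL-Analysis.Analysis"
begin

text \<open>Stress/strain vectors are elements of real^4 with the component convention
  index 1 = r, 2 = theta, 3 = z, 4 = rz (for strains: 2*eps_rz).\<close>

definition vec4 :: "real \<Rightarrow> real \<Rightarrow> real \<Rightarrow> real \<Rightarrow> real^4" where
  "vec4 a b c d = (\<chi> i. if i = 1 then a else if i = 2 then b else if i = 3 then c else d)"

text \<open>Norton strain rate with A = 1, as a map on stress vectors (output in Voigt form
  (eps_r, eps_theta, eps_z, 2 eps_rz)).\<close>

definition epsdot :: "real \<Rightarrow> real^4 \<Rightarrow> real^4" where
  "epsdot n \<sigma> =
     (let m = (\<sigma>$1 + \<sigma>$2 + \<sigma>$3) / 3;
          sr = \<sigma>$1 - m; st = \<sigma>$2 - m; sz = \<sigma>$3 - m; srz = \<sigma>$4;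
          vM = sqrt (3/2 * (sr^2 + st^2 + sz^2 + 2 * srz^2));
          f = vM powr (n - 1)
      in vec4 (sr * f) (st * f) (sz * f) (2 * srz * f))"

definition coef_a :: "real \<Rightarrow> real \<Rightarrow> real \<Rightarrow> real \<Rightarrow> real" where
  "coef_a ri ro p n = p * ri powr (2/n) / (ro powr (2/n) - ri powr (2/n))"

definition coef_ar :: "real \<Rightarrow> real \<Rightarrow> real \<Rightarrow> real \<Rightarrow> real" where
  "coef_ar ri ro p n = - p * ri powr (2/n) * ro powr (2/n) / (ro powr (2/n) - ri powr (2/n))"

definition sigma0 :: "real \<Rightarrow> real \<Rightarrow> real \<Rightarrow> real \<Rightarrow> real \<Rightarrow> real^4" where
  "sigma0 ri ro p n r =
     (let a = coef_a ri ro p n; ar = coef_ar ri ro p n;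
          ath = (n - 2) / n * ar; az = (n - 1) / n * ar
      in vec4 (a + ar * r powr (-2/n)) (a + ath * r powr (-2/n)) (a + az * r powr (-2/n)) 0)"

definition compliance :: "real \<Rightarrow> real \<Rightarrow> real \<Rightarrow> real \<Rightarrow> real \<Rightarrow> real^4^4" where
  "compliance ri ro p n r = jacobian (epsdot n) (at (sigma0 ri ro p n r))"

definition C1_partials ::
  "(real \<times> real \<Rightarrow> real) \<Rightarrow> (real \<times> real \<Rightarrow> real) \<Rightarrow> (real \<times> real \<Rightarrow> real) \<Rightarrow> (real \<times> real) set \<Rightarrow> bool" where
  "C1_partials f fr fz S \<longleftrightarrow>
     (\<forall>x\<in>S. (f has_derivative (\<lambda>(a, b). fr x * a + fz x * b)) (at x within S))
     \<and> continuous_on S fr \<and> continuous_on S fz"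

definition C1_on :: "(real \<times> real) set \<Rightarrow> (real \<times> real \<Rightarrow> real) \<Rightarrow> bool" where
  "C1_on S f \<longleftrightarrow> (\<exists>fr fz. C1_partials f fr fz S)"

definition equilibrium_C1 :: "(real \<times> real) set \<Rightarrow> (real \<times> real \<Rightarrow> real^4) \<Rightarrow> bool" where
  "equilibrium_C1 S \<sigma> \<longleftrightarrow>
     (\<exists>sr_r sr_z st_r st_z sz_r sz_z srz_r srz_z.
        C1_partials (\<lambda>x. \<sigma> x $ 1) sr_r sr_z S \<and>
        C1_partials (\<lambda>x. \<sigma> x $ 2) st_r st_z S \<and>
        C1_partials (\<lambda>x. \<sigma> x $ 3) sz_r sz_z S \<and>
        C1_partials (\<lambda>x. \<sigma> x $ 4) srz_r srz_z S \<and>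
        (\<forall>r z. (r, z) \<in> S \<longrightarrow>
           sr_r (r, z) + (\<sigma> (r, z) $ 1 - \<sigma> (r, z) $ 2) / r + srz_z (r, z) = 0 \<and>
           srz_r (r, z) + \<sigma> (r, z) $ 4 / r + sz_z (r, z) = 0))"

definition admissible :: "real \<Rightarrow> real \<Rightarrow> real \<Rightarrow> (real \<times> real \<Rightarrow> real^4) \<Rightarrow> bool" where
  "admissible ri ro H \<delta>\<sigma> \<longleftrightarrow>
     equilibrium_C1 ({ri..ro} \<times> {0..H}) \<delta>\<sigma> \<and>
     (\<forall>z\<in>{0..H}. \<forall>r\<in>{ri, ro}. \<delta>\<sigma> (r, z) $ 1 = 0 \<and> \<delta>\<sigma> (r, z) $ 4 = 0) \<and>
     (\<forall>r\<in>{ri..ro}. \<forall>z\<in>{0, H}. \<delta>\<sigma> (r, z) $ 4 = 0)"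

definition compatible ::
  "real \<Rightarrow> real \<Rightarrow> real \<Rightarrow> real \<Rightarrow> (real \<times> real) set \<Rightarrow>
   (real \<times> real \<Rightarrow> real) \<Rightarrow> (real \<times> real \<Rightarrow> real) \<Rightarrow> (real \<times> real \<Rightarrow> real^4) \<Rightarrow> bool" where
  "compatible ri ro p n S ur uz \<sigma> \<longleftrightarrow>
     (\<exists>ur_r ur_z uz_r uz_z.
        C1_partials ur ur_r ur_z S \<and> C1_partials uz uz_r uz_z S \<and>
        (\<forall>r z. (r, z) \<in> S \<longrightarrow>
           vec4 (ur_r (r, z)) (ur (r, z) / r) (uz_z (r, z)) (ur_z (r, z) + uz_r (r, z))
             = compliance ri ro p n r *v \<sigma> (r, z)))"

end

theory Submission
  imports Defs
begin

text \<open>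
  The compliance matrix C(r), the Jacobian of the Norton law at \<open>\<sigma>\<^sup>0(r)\<close>, is a multiple of the
  deviator plus a symmetric rank-one term, hence self-adjoint; so on each layer
  \<open>\<sigma>\<^sup>\<plusminus> \<cdot> C \<delta>\<sigma> = C \<sigma>\<^sup>\<plusminus> \<cdot> \<delta>\<sigma> = \<epsilon>(u\<^sup>\<plusminus>) : \<delta>\<sigma>\<close>.
  For the equilibrated field \<open>\<delta>\<sigma>\<close>, \<open>r \<epsilon>(u) : \<delta>\<sigma>\<close> is a divergence, so its integral over a
  layer reduces to face terms. The traction-free lateral faces and the conditions at z = 0 and
  z = H leave only the interface z = h, where the jump \<open>u\<^sub>r\<^sup>+ - u\<^sub>r\<^sup>- = c/r\<close> contributes
  \<open>- c \<integral> \<delta>\<sigma>\<^sub>r\<^sub>z(r, h) dr\<close>. The right-hand side has the same value because the Norton strain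
  rate at \<open>\<sigma>\<^sup>0\<close> is \<open>(c/r\<^sup>2, -c/r\<^sup>2, 0, 0)\<close>, the strain of the radial displacement \<open>-c/r\<close>.
\<close>

lemma vec4_nth [simp]:
  "vec4 a b c d $ 1 = a" "vec4 a b c d $ 2 = b" "vec4 a b c d $ 3 = c" "vec4 a b c d $ 4 = d"
  by (simp_all add: vec4_def)

lemma inner_vec4: "vec4 a b c d \<bullet> y = a * y $ 1 + b * y $ 2 + c * y $ 3 + d * y $ 4"
  by (simp add: inner_vec_def sum_4)

definition voigt_dev :: "real^4 \<Rightarrow> real^4" where
  "voigt_dev s =
     (let m = (s $ 1 + s $ 2 + s $ 3) / 3 in vec4 (s $ 1 - m) (s $ 2 - m) (s $ 3 - m) (2 * s $ 4))"

definition von_mises_sq :: "real^4 \<Rightarrow> real" where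
  "von_mises_sq s = 3 / 2 * (voigt_dev s \<bullet> s)"

lemma linear_voigt_dev: "linear voigt_dev"
  by (rule linearI) (simp_all add: vec_eq_iff forall_4 voigt_dev_def Let_def field_simps)

lemma has_derivative_voigt_dev: "(voigt_dev has_derivative voigt_dev) F"
  using linear_voigt_dev by (simp add: linear_conv_bounded_linear bounded_linear_imp_has_derivative)

lemma voigt_dev_inner_commute: "voigt_dev x \<bullet> y = voigt_dev y \<bullet> x"
  by (simp add: voigt_dev_def Let_def inner_vec4 field_simps)

lemma von_mises_sq_eq:
  "von_mises_sq s = 3 / 2 * (let m = (s $ 1 + s $ 2 + s $ 3) / 3
     in (s $ 1 - m)\<^sup>2 + (s $ 2 - m)\<^sup>2 + (s $ 3 - m)\<^sup>2 + 2 * (s $ 4)\<^sup>2)"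
  by (simp add: von_mises_sq_def voigt_dev_def Let_def inner_vec4 field_simps power2_eq_square)

lemma von_mises_sq_nonneg: "0 \<le> von_mises_sq s"
  unfolding von_mises_sq_eq Let_def by simp

lemma epsdot_eq_powr: "epsdot n s = von_mises_sq s powr ((n - 1) / 2) *\<^sub>R voigt_dev s"
proof -
  have "sqrt (von_mises_sq s) powr (n - 1) = von_mises_sq s powr ((n - 1) / 2)"
    using von_mises_sq_nonneg[of s] by (simp add: powr_half_sqrt[symmetric] powr_powr)
  then show ?thesis
    by (simp add: epsdot_def von_mises_sq_eq voigt_dev_def Let_def vec_eq_iff forall_4 algebra_simps)
qed

lemma has_derivative_von_mises_sq:
  "(von_mises_sq has_derivative (\<lambda>h. 3 * (voigt_dev s \<bullet> h))) (at s)"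
proof -
  have "(von_mises_sq has_derivative (\<lambda>h. 3 / 2 * (voigt_dev s \<bullet> h + voigt_dev h \<bullet> s))) (at s)"
    unfolding von_mises_sq_def[abs_def] by (auto intro!: derivative_eq_intros has_derivative_voigt_dev)
  then show ?thesis
    by (simp add: voigt_dev_inner_commute[of _ s])
qed

definition norton_tangent :: "real \<Rightarrow> real^4 \<Rightarrow> real^4 \<Rightarrow> real^4" where
  "norton_tangent n s h =
     von_mises_sq s powr ((n - 1) / 2) *\<^sub>R
       (voigt_dev h + (3 * (n - 1) / 2 * (voigt_dev s \<bullet> h) / von_mises_sq s) *\<^sub>R voigt_dev s)"

lemma has_derivative_epsdot:
  assumes "0 < von_mises_sq s"
  shows "(epsdot n has_derivative norton_tangent n s) (at s)"
proof -
  have pow: "((\<lambda>x. von_mises_sq x powr ((n - 1) / 2)) has_derivative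
      (\<lambda>h. von_mises_sq s powr ((n - 1) / 2) * (3 * (voigt_dev s \<bullet> h) * ((n - 1) / 2) / von_mises_sq s))) (at s)"
    by (rule has_derivative_eq_rhs[OF has_derivative_powr[OF has_derivative_von_mises_sq has_derivative_const assms]])
      auto
  show ?thesis
    unfolding epsdot_eq_powr[abs_def]
    by (rule has_derivative_eq_rhs[OF has_derivative_scaleR[OF pow has_derivative_voigt_dev]])
      (auto simp: norton_tangent_def fun_eq_iff scaleR_add_right algebra_simps)
qed

lemma norton_tangent_inner_commute: "norton_tangent n s h \<bullet> k = h \<bullet> norton_tangent n s k"
  unfolding norton_tangent_def inner_add_left inner_add_right inner_scaleR_left inner_scaleR_right
  by (simp add: voigt_dev_inner_commute[of h k] voigt_dev_inner_commute[of s] inner_commute[of h] algebra_simps)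

lemma jacobian_mult_vec_eq:
  fixes f :: "real^'a \<Rightarrow> real^'b"
  assumes "(f has_derivative f') (at x)"
  shows "jacobian f (at x) *v y = f' y"
proof -
  have "(f has_derivative (\<lambda>h. jacobian f (at x) *v h)) (at x)"
    using assms jacobian_works unfolding differentiable_def by blast
  then show ?thesis
    using has_derivative_unique[OF assms] by metis
qed

lemma compliance_mult_vec:
  assumes "0 < von_mises_sq (sigma0 ri ro p n r)"
  shows "compliance ri ro p n r *v x = norton_tangent n (sigma0 ri ro p n r) x"
  unfolding compliance_def by (rule jacobian_mult_vec_eq[OF has_derivative_epsdot[OF assms]])

lemma compliance_inner_commute:
  assumes "0 < von_mises_sq (sigma0 ri ro p n r)"
  shows "x \<bullet> (compliance ri ro p n r *v y) = (compliance ri ro p n r *v x) \<bullet> y"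
  by (simp add: compliance_mult_vec[OF assms] norton_tangent_inner_commute)

definition creep_coeff :: "real \<Rightarrow> real \<Rightarrow> real \<Rightarrow> real \<Rightarrow> real" where
  "creep_coeff ri ro p n =
     (let ar = coef_ar ri ro p n in 3 powr ((n - 1) / 2) * ar * \<bar>ar\<bar> powr (n - 1) * n powr (- n))"

lemma coef_ar_neg:
  assumes "0 < ri" "ri < ro" "0 < n" "0 < p"
  shows "coef_ar ri ro p n < 0"
proof -
  have "0 < ri powr (2 / n)" "ri powr (2 / n) < ro powr (2 / n)"
    using assms by (auto intro: powr_less_mono2)
  then show ?thesis
    using assms unfolding coef_ar_def by (simp add: divide_neg_pos)
qed

lemma sigma0_eq:
  "sigma0 ri ro p n r =
     (let a = coef_a ri ro p n; x = coef_ar ri ro p n * r powr (- 2 / n)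
      in vec4 (a + x) (a + (n - 2) / n * x) (a + (n - 1) / n * x) 0)"
  by (simp add: sigma0_def Let_def mult.assoc)

lemma voigt_dev_sigma0:
  assumes "0 < n"
  shows "voigt_dev (sigma0 ri ro p n r) =
    (let x = coef_ar ri ro p n * r powr (- 2 / n) / n in vec4 x (- x) 0 0)"
  using assms by (simp add: sigma0_eq voigt_dev_def Let_def vec_eq_iff forall_4 field_simps)

lemma von_mises_sq_sigma0:
  assumes "0 < n"
  shows "von_mises_sq (sigma0 ri ro p n r) = 3 * (coef_ar ri ro p n * r powr (- 2 / n) / n)\<^sup>2"
proof -
  have "voigt_dev (sigma0 ri ro p n r) \<bullet> sigma0 ri ro p n r = 2 * (coef_ar ri ro p n * r powr (- 2 / n) / n)\<^sup>2"
    unfolding voigt_dev_sigma0[OF assms] using assms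
    by (simp add: sigma0_eq Let_def inner_vec4 field_simps power2_eq_square)
  then show ?thesis
    by (simp add: von_mises_sq_def)
qed

lemma von_mises_sq_sigma0_pos:
  assumes "0 < ri" "ri < ro" "0 < n" "0 < p" "0 < r"
  shows "0 < von_mises_sq (sigma0 ri ro p n r)"
  using coef_ar_neg[OF assms(1-4)] assms by (simp add: von_mises_sq_sigma0)

lemma power2_powr_half: "(x\<^sup>2) powr (m / 2) = \<bar>x::real\<bar> powr m"
proof -
  have "(x\<^sup>2) powr (m / 2) = (\<bar>x\<bar> powr 2) powr (m / 2)"
    by simp
  also have "\<dots> = \<bar>x\<bar> powr m"
    unfolding powr_powr by simp
  finally show ?thesis .
qed

lemma epsdot_sigma0:
  assumes "0 < n" "0 < r"
  shows "epsdot n (sigma0 ri ro p n r) =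
    vec4 (creep_coeff ri ro p n / r\<^sup>2) (- (creep_coeff ri ro p n / r\<^sup>2)) 0 0"
proof -
  define A where "A = coef_ar ri ro p n"
  define t where "t = r powr (- 2 / n)"
  define x where "x = A * t / n"
  have "t > 0"
    using assms by (simp add: t_def)
  have "t powr n = r powr (- 2 / n * n)"
    unfolding t_def powr_powr ..
  also have "\<dots> = 1 / r\<^sup>2"
    using assms by (simp add: powr_minus_divide powr_numeral)
  finally have "t powr n = 1 / r\<^sup>2" .
  have "(3 * x\<^sup>2) powr ((n - 1) / 2) * x = 3 powr ((n - 1) / 2) * (\<bar>x\<bar> powr (n - 1) * x)"
    by (simp add: powr_mult power2_powr_half)
  also have "\<bar>x\<bar> powr (n - 1) * x = A * \<bar>A\<bar> powr (n - 1) * n powr (- n) * t powr n"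
    using assms \<open>t > 0\<close>
    by (simp add: x_def abs_mult powr_mult powr_divide powr_diff powr_minus divide_simps)
  finally have "(3 * x\<^sup>2) powr ((n - 1) / 2) * x = creep_coeff ri ro p n / r\<^sup>2"
    using \<open>t powr n = 1 / r\<^sup>2\<close> by (simp add: creep_coeff_def A_def Let_def)
  moreover have "epsdot n (sigma0 ri ro p n r) = (3 * x\<^sup>2) powr ((n - 1) / 2) *\<^sub>R vec4 x (- x) 0 0"
    using assms by (simp add: epsdot_eq_powr von_mises_sq_sigma0 voigt_dev_sigma0 x_def A_def t_def Let_def)
  ultimately show ?thesis
    by (simp add: vec_eq_iff forall_4)
qed

lemma C1_partials_continuous_on: "C1_partials f fr fz S \<Longrightarrow> continuous_on S f"
  unfolding C1_partials_def continuous_on_eq_continuous_within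
  using has_derivative_continuous by blast

lemma C1_partials_subset: "C1_partials f fr fz S \<Longrightarrow> T \<subseteq> S \<Longrightarrow> C1_partials f fr fz T"
  unfolding C1_partials_def by (meson has_derivative_subset continuous_on_subset subsetD)

lemma equilibrium_C1_subset: "equilibrium_C1 S \<sigma> \<Longrightarrow> T \<subseteq> S \<Longrightarrow> equilibrium_C1 T \<sigma>"
  unfolding equilibrium_C1_def by (meson C1_partials_subset subsetD)

lemma C1_partials_has_real_derivative_fst:
  assumes "C1_partials f fr fz (A \<times> B)" "r \<in> A" "z \<in> B"
  shows "((\<lambda>r. f (r, z)) has_real_derivative fr (r, z)) (at r within A)"
proof -
  have "(f has_derivative (\<lambda>(u, v). fr (r, z) * u + fz (r, z) * v)) (at (r, z) within (\<lambda>r. (r, z)) ` A)"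
    using assms unfolding C1_partials_def by (auto intro: has_derivative_subset)
  moreover have "((\<lambda>r. (r, z)) has_derivative (\<lambda>h. (h, 0))) (at r within A)"
    by (auto intro!: derivative_eq_intros)
  ultimately have "((\<lambda>r. f (r, z)) has_derivative (\<lambda>h. fr (r, z) * h)) (at r within A)"
    using diff_chain_within by (fastforce simp: o_def)
  then show ?thesis
    by (simp add: has_field_derivative_def)
qed

lemma C1_partials_has_real_derivative_snd:
  assumes "C1_partials f fr fz (A \<times> B)" "r \<in> A" "z \<in> B"
  shows "((\<lambda>z. f (r, z)) has_real_derivative fz (r, z)) (at z within B)"
proof -
  have "(f has_derivative (\<lambda>(u, v). fr (r, z) * u + fz (r, z) * v)) (at (r, z) within (\<lambda>z. (r, z)) ` B)"
    using assms unfolding C1_partials_def by (auto intro: has_derivative_subset)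
  moreover have "((\<lambda>z. (r, z)) has_derivative (\<lambda>h. (0, h))) (at z within B)"
    by (auto intro!: derivative_eq_intros)
  ultimately have "((\<lambda>z. f (r, z)) has_derivative (\<lambda>h. fz (r, z) * h)) (at z within B)"
    using diff_chain_within by (fastforce simp: o_def)
  then show ?thesis
    by (simp add: has_field_derivative_def)
qed

lemma continuous_on_slice_snd:
  "continuous_on (A \<times> B) f \<Longrightarrow> r \<in> A \<Longrightarrow> continuous_on B (\<lambda>z. f (r, z))"
  by (rule continuous_on_compose2[of _ f]) (auto intro!: continuous_intros)

lemma continuous_on_integral_slice:
  fixes f :: "real \<times> real \<Rightarrow> real"
  assumes "continuous_on (A \<times> {a..b}) f"
  shows "continuous_on A (\<lambda>r. integral {a..b} (\<lambda>z. f (r, z)))"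
  using integral_continuous_on_param[of A a b "\<lambda>r z. f (r, z)"] assms by (simp add: cbox_interval)

lemma integral_integral_eq_fst_boundary:
  fixes P Pr :: "real \<times> real \<Rightarrow> real"
  assumes "ri \<le> ro"
    and cont: "continuous_on ({ri..ro} \<times> {a..b}) Pr"
    and dP: "\<And>r z. r \<in> {ri..ro} \<Longrightarrow> z \<in> {a..b} \<Longrightarrow>
               ((\<lambda>r. P (r, z)) has_real_derivative Pr (r, z)) (at r within {ri..ro})"
  shows "integral {ri..ro} (\<lambda>r. integral {a..b} (\<lambda>z. Pr (r, z))) = integral {a..b} (\<lambda>z. P (ro, z) - P (ri, z))"
proof -
  have "integral {ri..ro} (\<lambda>r. integral {a..b} (\<lambda>z. Pr (r, z)))
      = integral {a..b} (\<lambda>z. integral {ri..ro} (\<lambda>r. Pr (r, z)))"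
    using integral_swap_continuous[of ri a ro b "\<lambda>r z. Pr (r, z)", unfolded cbox_Pair_eq] cont
    by (simp add: cbox_interval)
  also have "\<dots> = integral {a..b} (\<lambda>z. P (ro, z) - P (ri, z))"
  proof (intro integral_cong integral_unique)
    fix z
    assume "z \<in> {a..b}"
    with dP show "((\<lambda>r. Pr (r, z)) has_integral P (ro, z) - P (ri, z)) {ri..ro}"
      using fundamental_theorem_of_calculus[OF \<open>ri \<le> ro\<close>, of "\<lambda>r. P (r, z)"]
      by (simp add: has_real_derivative_iff_has_vector_derivative)
  qed
  finally show ?thesis .
qed

lemma has_integral_divergence_rectangle:
  fixes P Q Pr Qz :: "real \<times> real \<Rightarrow> real"
  assumes "ri \<le> ro" "a \<le> b"
    and cont: "continuous_on ({ri..ro} \<times> {a..b}) Pr" "continuous_on ({ri..ro} \<times> {a..b}) Qz"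
    and dP: "\<And>r z. r \<in> {ri..ro} \<Longrightarrow> z \<in> {a..b} \<Longrightarrow>
               ((\<lambda>r. P (r, z)) has_real_derivative Pr (r, z)) (at r within {ri..ro})"
    and dQ: "\<And>r z. r \<in> {ri..ro} \<Longrightarrow> z \<in> {a..b} \<Longrightarrow>
               ((\<lambda>z. Q (r, z)) has_real_derivative Qz (r, z)) (at z within {a..b})"
  shows "(\<lambda>r. Q (r, b) - Q (r, a)) integrable_on {ri..ro}"
    and "((\<lambda>r. integral {a..b} (\<lambda>z. Pr (r, z) + Qz (r, z))) has_integral
           integral {a..b} (\<lambda>z. P (ro, z) - P (ri, z)) + integral {ri..ro} (\<lambda>r. Q (r, b) - Q (r, a)))
         {ri..ro}"
proof -
  have ftc_z: "((\<lambda>z. Qz (r, z)) has_integral Q (r, b) - Q (r, a)) {a..b}" if "r \<in> {ri..ro}" for r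
    using fundamental_theorem_of_calculus[OF \<open>a \<le> b\<close>, of "\<lambda>z. Q (r, z)"] dQ that
    by (simp add: has_real_derivative_iff_has_vector_derivative)
  have int_Pr: "(\<lambda>r. integral {a..b} (\<lambda>z. Pr (r, z))) integrable_on {ri..ro}"
    and int_Qz: "(\<lambda>r. integral {a..b} (\<lambda>z. Qz (r, z))) integrable_on {ri..ro}"
    using cont by (auto intro!: integrable_continuous_interval continuous_on_integral_slice)
  have Qz_eq: "integral {a..b} (\<lambda>z. Qz (r, z)) = Q (r, b) - Q (r, a)" if "r \<in> {ri..ro}" for r
    using ftc_z[OF that] by (rule integral_unique)
  show int_Q: "(\<lambda>r. Q (r, b) - Q (r, a)) integrable_on {ri..ro}"
    using int_Qz Qz_eq by (rule integrable_eq)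
  have "((\<lambda>r. integral {a..b} (\<lambda>z. Pr (r, z)) + (Q (r, b) - Q (r, a))) has_integral
      integral {a..b} (\<lambda>z. P (ro, z) - P (ri, z)) + integral {ri..ro} (\<lambda>r. Q (r, b) - Q (r, a))) {ri..ro}"
    using has_integral_add[OF integrable_integral[OF int_Pr] integrable_integral[OF int_Q]]
    by (simp only: integral_integral_eq_fst_boundary[OF \<open>ri \<le> ro\<close> cont(1) dP])
  moreover have "integral {a..b} (\<lambda>z. Pr (r, z)) + (Q (r, b) - Q (r, a))
      = integral {a..b} (\<lambda>z. Pr (r, z) + Qz (r, z))" if "r \<in> {ri..ro}" for r
  proof -
    have "(\<lambda>z. Pr (r, z)) integrable_on {a..b}"
      using that cont(1) by (intro integrable_continuous_interval continuous_on_slice_snd)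
    then show ?thesis
      using ftc_z[OF that] Qz_eq[OF that] by (simp add: integral_add has_integral_integrable)
  qed
  ultimately show "((\<lambda>r. integral {a..b} (\<lambda>z. Pr (r, z) + Qz (r, z))) has_integral
      integral {a..b} (\<lambda>z. P (ro, z) - P (ri, z)) + integral {ri..ro} (\<lambda>r. Q (r, b) - Q (r, a))) {ri..ro}"
    by (rule has_integral_eq[rotated])
qed

text \<open>The hypotheses are the equilibrium equations, with \<open>s1r = \<partial>\<^sub>r\<sigma>\<^sub>r\<close> etc.; the right-hand
  side is \<open>\<partial>\<^sub>r(r (u\<^sub>r \<sigma>\<^sub>r + u\<^sub>z \<sigma>\<^sub>r\<^sub>z)) + \<partial>\<^sub>z(r (u\<^sub>r \<sigma>\<^sub>r\<^sub>z + u\<^sub>z \<sigma>\<^sub>z))\<close> expanded by the product rule.\<close>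

lemma work_density_eq_divergence:
  fixes s :: "real^4"
  assumes "r \<noteq> 0" "s1r + (s $ 1 - s $ 2) / r + s4z = 0" "s4r + s $ 4 / r + s3z = 0"
  shows "(vec4 ur_r (ur / r) uz_z (ur_z + uz_r) \<bullet> s) * r =
    ur * s $ 1 + uz * s $ 4 + r * (ur_r * s $ 1 + ur * s1r + uz_r * s $ 4 + uz * s4r)
    + r * (ur_z * s $ 4 + ur * s4z + uz_z * s $ 3 + uz * s3z)"
proof -
  have s2: "s $ 2 = s $ 1 + r * s1r + r * s4z" and s4: "s $ 4 = - r * s4r - r * s3z"
    using assms by (simp_all add: field_simps)
  show ?thesis
    unfolding inner_vec4 vec4_nth s2 s4 using \<open>r \<noteq> 0\<close> by (simp add: field_simps)
qed

definition voigt_strain ::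
  "(real \<times> real \<Rightarrow> real) \<Rightarrow> (real \<times> real \<Rightarrow> real) \<Rightarrow> (real \<times> real \<Rightarrow> real) \<Rightarrow>
   (real \<times> real \<Rightarrow> real) \<Rightarrow> (real \<times> real \<Rightarrow> real) \<Rightarrow> real \<times> real \<Rightarrow> real^4" where
  "voigt_strain ur ur_r ur_z uz_r uz_z x = vec4 (ur_r x) (ur x / fst x) (uz_z x) (ur_z x + uz_r x)"

definition radial_face_work ::
  "(real \<times> real \<Rightarrow> real) \<Rightarrow> (real \<times> real \<Rightarrow> real) \<Rightarrow> (real \<times> real \<Rightarrow> real^4) \<Rightarrow> real \<times> real \<Rightarrow> real" where
  "radial_face_work ur uz \<sigma> x = fst x * (ur x * \<sigma> x $ 1 + uz x * \<sigma> x $ 4)"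

definition axial_face_work ::
  "(real \<times> real \<Rightarrow> real) \<Rightarrow> (real \<times> real \<Rightarrow> real) \<Rightarrow> (real \<times> real \<Rightarrow> real^4) \<Rightarrow> real \<times> real \<Rightarrow> real" where
  "axial_face_work ur uz \<sigma> x = fst x * (ur x * \<sigma> x $ 4 + uz x * \<sigma> x $ 3)"

lemma equilibrium_work_density_divergence:
  fixes \<sigma> :: "real \<times> real \<Rightarrow> real^4"
  assumes "0 < ri"
    and eq: "equilibrium_C1 ({ri..ro} \<times> {a..b}) \<sigma>"
    and ur: "C1_partials ur ur_r ur_z ({ri..ro} \<times> {a..b})"
    and uz: "C1_partials uz uz_r uz_z ({ri..ro} \<times> {a..b})"
  obtains Pr Qz where
    "continuous_on ({ri..ro} \<times> {a..b}) Pr" "continuous_on ({ri..ro} \<times> {a..b}) Qz"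
    "\<And>r z. r \<in> {ri..ro} \<Longrightarrow> z \<in> {a..b} \<Longrightarrow>
       ((\<lambda>r. radial_face_work ur uz \<sigma> (r, z)) has_real_derivative Pr (r, z)) (at r within {ri..ro})"
    "\<And>r z. r \<in> {ri..ro} \<Longrightarrow> z \<in> {a..b} \<Longrightarrow>
       ((\<lambda>z. axial_face_work ur uz \<sigma> (r, z)) has_real_derivative Qz (r, z)) (at z within {a..b})"
    "\<And>r z. r \<in> {ri..ro} \<Longrightarrow> z \<in> {a..b} \<Longrightarrow>
       (voigt_strain ur ur_r ur_z uz_r uz_z (r, z) \<bullet> \<sigma> (r, z)) * r = Pr (r, z) + Qz (r, z)"
proof -
  let ?R = "{ri..ro} \<times> {a..b}"
  obtain s1r s1z s3r s3z s4r s4z where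
    s1: "C1_partials (\<lambda>x. \<sigma> x $ 1) s1r s1z ?R"
    and s3: "C1_partials (\<lambda>x. \<sigma> x $ 3) s3r s3z ?R" and s4: "C1_partials (\<lambda>x. \<sigma> x $ 4) s4r s4z ?R"
    and div: "\<And>r z. (r, z) \<in> ?R \<Longrightarrow>
          s1r (r, z) + (\<sigma> (r, z) $ 1 - \<sigma> (r, z) $ 2) / r + s4z (r, z) = 0 \<and>
          s4r (r, z) + \<sigma> (r, z) $ 4 / r + s3z (r, z) = 0"
    using eq unfolding equilibrium_C1_def by blast
  define Pr where "Pr x = ur x * \<sigma> x $ 1 + uz x * \<sigma> x $ 4
    + fst x * (ur_r x * \<sigma> x $ 1 + ur x * s1r x + uz_r x * \<sigma> x $ 4 + uz x * s4r x)" for x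
  define Qz where "Qz x = fst x * (ur_z x * \<sigma> x $ 4 + ur x * s4z x + uz_z x * \<sigma> x $ 3 + uz x * s3z x)" for x
  have cont: "continuous_on ?R (\<lambda>x. \<sigma> x $ 1)" "continuous_on ?R (\<lambda>x. \<sigma> x $ 3)"
    "continuous_on ?R (\<lambda>x. \<sigma> x $ 4)" "continuous_on ?R s1r" "continuous_on ?R s3z"
    "continuous_on ?R s4r" "continuous_on ?R s4z" "continuous_on ?R ur" "continuous_on ?R ur_r"
    "continuous_on ?R ur_z" "continuous_on ?R uz" "continuous_on ?R uz_r" "continuous_on ?R uz_z"
    using s1 s3 s4 ur uz by (simp_all add: C1_partials_continuous_on) (simp_all add: C1_partials_def)
  show thesis
  proof
    show "continuous_on ?R Pr" "continuous_on ?R Qz"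
      unfolding Pr_def[abs_def] Qz_def[abs_def] by (intro continuous_intros cont)+
  next
    fix r z
    assume rz: "r \<in> {ri..ro}" "z \<in> {a..b}"
    show "((\<lambda>r. radial_face_work ur uz \<sigma> (r, z)) has_real_derivative Pr (r, z)) (at r within {ri..ro})"
      unfolding radial_face_work_def Pr_def fst_conv
      by (rule derivative_eq_intros C1_partials_has_real_derivative_fst[OF s1 rz]
          C1_partials_has_real_derivative_fst[OF s4 rz] C1_partials_has_real_derivative_fst[OF ur rz]
          C1_partials_has_real_derivative_fst[OF uz rz] refl)+
        (simp add: algebra_simps)
    show "((\<lambda>z. axial_face_work ur uz \<sigma> (r, z)) has_real_derivative Qz (r, z)) (at z within {a..b})"
      unfolding axial_face_work_def Qz_def fst_conv
      by (rule derivative_eq_intros C1_partials_has_real_derivative_snd[OF s3 rz]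
          C1_partials_has_real_derivative_snd[OF s4 rz] C1_partials_has_real_derivative_snd[OF ur rz]
          C1_partials_has_real_derivative_snd[OF uz rz] refl)+
        (simp add: algebra_simps)
    have "r \<noteq> 0"
      using rz \<open>0 < ri\<close> by auto
    then show "(voigt_strain ur ur_r ur_z uz_r uz_z (r, z) \<bullet> \<sigma> (r, z)) * r = Pr (r, z) + Qz (r, z)"
      unfolding voigt_strain_def Pr_def Qz_def fst_conv
      using div rz by (intro work_density_eq_divergence) auto
  qed
qed

lemma virtual_work_rectangle:
  fixes \<sigma> :: "real \<times> real \<Rightarrow> real^4"
  assumes "0 < ri" "ri \<le> ro" "a \<le> b"
    and eq: "equilibrium_C1 ({ri..ro} \<times> {a..b}) \<sigma>"
    and free: "\<forall>z\<in>{a..b}. \<forall>r\<in>{ri, ro}. \<sigma> (r, z) $ 1 = 0 \<and> \<sigma> (r, z) $ 4 = 0"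
    and ur: "C1_partials ur ur_r ur_z ({ri..ro} \<times> {a..b})"
    and uz: "C1_partials uz uz_r uz_z ({ri..ro} \<times> {a..b})"
  shows "\<And>r. r \<in> {ri..ro} \<Longrightarrow>
           (\<lambda>z. (voigt_strain ur ur_r ur_z uz_r uz_z (r, z) \<bullet> \<sigma> (r, z)) * r) integrable_on {a..b}"
    and "(\<lambda>r. axial_face_work ur uz \<sigma> (r, b) - axial_face_work ur uz \<sigma> (r, a)) integrable_on {ri..ro}"
    and "((\<lambda>r. integral {a..b} (\<lambda>z. (voigt_strain ur ur_r ur_z uz_r uz_z (r, z) \<bullet> \<sigma> (r, z)) * r))
          has_integral integral {ri..ro} (\<lambda>r. axial_face_work ur uz \<sigma> (r, b) - axial_face_work ur uz \<sigma> (r, a)))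
         {ri..ro}"
proof -
  obtain Pr Qz where cont: "continuous_on ({ri..ro} \<times> {a..b}) Pr" "continuous_on ({ri..ro} \<times> {a..b}) Qz"
    and derivs: "\<And>r z. r \<in> {ri..ro} \<Longrightarrow> z \<in> {a..b} \<Longrightarrow>
       ((\<lambda>r. radial_face_work ur uz \<sigma> (r, z)) has_real_derivative Pr (r, z)) (at r within {ri..ro})"
      "\<And>r z. r \<in> {ri..ro} \<Longrightarrow> z \<in> {a..b} \<Longrightarrow>
       ((\<lambda>z. axial_face_work ur uz \<sigma> (r, z)) has_real_derivative Qz (r, z)) (at z within {a..b})"
    and density: "\<And>r z. r \<in> {ri..ro} \<Longrightarrow> z \<in> {a..b} \<Longrightarrow>
       (voigt_strain ur ur_r ur_z uz_r uz_z (r, z) \<bullet> \<sigma> (r, z)) * r = Pr (r, z) + Qz (r, z)"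
    using equilibrium_work_density_divergence[OF \<open>0 < ri\<close> eq ur uz] by blast
  note divergence = has_integral_divergence_rectangle[where P = "radial_face_work ur uz \<sigma>"
      and Q = "axial_face_work ur uz \<sigma>", OF \<open>ri \<le> ro\<close> \<open>a \<le> b\<close> cont derivs]
  show "(\<lambda>z. (voigt_strain ur ur_r ur_z uz_r uz_z (r, z) \<bullet> \<sigma> (r, z)) * r) integrable_on {a..b}"
    if "r \<in> {ri..ro}" for r
    using integrable_continuous_interval[OF continuous_on_slice_snd[OF continuous_on_add[OF cont] that]]
    by (rule integrable_eq) (use that density in simp)
  show "(\<lambda>r. axial_face_work ur uz \<sigma> (r, b) - axial_face_work ur uz \<sigma> (r, a)) integrable_on {ri..ro}"
    using divergence(1) by simp
  have "integral {a..b} (\<lambda>z. radial_face_work ur uz \<sigma> (ro, z) - radial_face_work ur uz \<sigma> (ri, z))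
      = integral {a..b} (\<lambda>z. 0)"
    using free by (intro integral_cong) (simp add: radial_face_work_def)
  then have no_lateral_work:
    "integral {a..b} (\<lambda>z. radial_face_work ur uz \<sigma> (ro, z) - radial_face_work ur uz \<sigma> (ri, z)) = 0"
    by simp
  have "integral {a..b} (\<lambda>z. Pr (r, z) + Qz (r, z))
      = integral {a..b} (\<lambda>z. (voigt_strain ur ur_r ur_z uz_r uz_z (r, z) \<bullet> \<sigma> (r, z)) * r)"
    if "r \<in> {ri..ro}" for r
    using that density by (intro integral_cong) simp
  with divergence(2)[unfolded no_lateral_work add_0_left]
  show "((\<lambda>r. integral {a..b} (\<lambda>z. (voigt_strain ur ur_r ur_z uz_r uz_z (r, z) \<bullet> \<sigma> (r, z)) * r))
          has_integral integral {ri..ro} (\<lambda>r. axial_face_work ur uz \<sigma> (r, b) - axial_face_work ur uz \<sigma> (r, a)))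
         {ri..ro}"
    by (rule has_integral_eq[rotated])
qed

lemma layer_virtual_work:
  fixes \<sigma> \<delta>\<sigma> :: "real \<times> real \<Rightarrow> real^4"
  assumes "0 < ri" "ri < ro" "0 < n" "0 < p" "a \<le> b"
    and comp: "compatible ri ro p n ({ri..ro} \<times> {a..b}) ur uz \<sigma>"
    and eq: "equilibrium_C1 ({ri..ro} \<times> {a..b}) \<delta>\<sigma>"
    and free: "\<forall>z\<in>{a..b}. \<forall>r\<in>{ri, ro}. \<delta>\<sigma> (r, z) $ 1 = 0 \<and> \<delta>\<sigma> (r, z) $ 4 = 0"
  shows "\<And>r. r \<in> {ri..ro} \<Longrightarrow>
           (\<lambda>z. (\<sigma> (r, z) \<bullet> (compliance ri ro p n r *v \<delta>\<sigma> (r, z))) * r) integrable_on {a..b}"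
    and "(\<lambda>r. axial_face_work ur uz \<delta>\<sigma> (r, b) - axial_face_work ur uz \<delta>\<sigma> (r, a)) integrable_on {ri..ro}"
    and "((\<lambda>r. integral {a..b} (\<lambda>z. (\<sigma> (r, z) \<bullet> (compliance ri ro p n r *v \<delta>\<sigma> (r, z))) * r))
          has_integral integral {ri..ro} (\<lambda>r. axial_face_work ur uz \<delta>\<sigma> (r, b) - axial_face_work ur uz \<delta>\<sigma> (r, a)))
         {ri..ro}"
proof -
  obtain ur_r ur_z uz_r uz_z where
    ur: "C1_partials ur ur_r ur_z ({ri..ro} \<times> {a..b})" and uz: "C1_partials uz uz_r uz_z ({ri..ro} \<times> {a..b})"
    and strain: "\<And>r z. (r, z) \<in> {ri..ro} \<times> {a..b} \<Longrightarrow>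
      voigt_strain ur ur_r ur_z uz_r uz_z (r, z) = compliance ri ro p n r *v \<sigma> (r, z)"
    using comp unfolding compatible_def voigt_strain_def by auto
  have work_eq: "(\<sigma> (r, z) \<bullet> (compliance ri ro p n r *v \<delta>\<sigma> (r, z))) * r
      = (voigt_strain ur ur_r ur_z uz_r uz_z (r, z) \<bullet> \<delta>\<sigma> (r, z)) * r"
    if "(r, z) \<in> {ri..ro} \<times> {a..b}" for r z
    using that assms(1-4) by (simp add: strain compliance_inner_commute von_mises_sq_sigma0_pos)
  have "ri \<le> ro"
    using \<open>ri < ro\<close> by simp
  note vw = virtual_work_rectangle[OF \<open>0 < ri\<close> this \<open>a \<le> b\<close> eq free ur uz]
  show "(\<lambda>z. (\<sigma> (r, z) \<bullet> (compliance ri ro p n r *v \<delta>\<sigma> (r, z))) * r) integrable_on {a..b}"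
    if "r \<in> {ri..ro}" for r
    using vw(1)[OF that] by (rule integrable_eq) (use that in \<open>simp add: work_eq\<close>)
  show "(\<lambda>r. axial_face_work ur uz \<delta>\<sigma> (r, b) - axial_face_work ur uz \<delta>\<sigma> (r, a)) integrable_on {ri..ro}"
    by (fact vw(2))
  show "((\<lambda>r. integral {a..b} (\<lambda>z. (\<sigma> (r, z) \<bullet> (compliance ri ro p n r *v \<delta>\<sigma> (r, z))) * r))
          has_integral integral {ri..ro} (\<lambda>r. axial_face_work ur uz \<delta>\<sigma> (r, b) - axial_face_work ur uz \<delta>\<sigma> (r, a)))
         {ri..ro}"
    using vw(3) by (rule has_integral_eq[rotated]) (intro integral_cong, simp add: work_eq)
qed

lemma C1_partials_const: "C1_partials (\<lambda>x. c) (\<lambda>x. 0) (\<lambda>x. 0) S"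
  unfolding C1_partials_def by (auto intro!: derivative_eq_intros)

lemma C1_partials_divide_fst:
  assumes "\<forall>x\<in>S. fst x \<noteq> 0"
  shows "C1_partials (\<lambda>x. c / fst x) (\<lambda>x. - c / (fst x)\<^sup>2) (\<lambda>x. 0) S"
  unfolding C1_partials_def
proof (intro conjI ballI)
  fix x
  assume "x \<in> S"
  with assms show "((\<lambda>x. c / fst x) has_derivative (\<lambda>(u, v). - c / (fst x)\<^sup>2 * u + 0 * v)) (at x within S)"
    by (auto intro!: derivative_eq_intros simp: power2_eq_square field_simps split_beta)
next
  show "continuous_on S (\<lambda>x. - c / (fst x)\<^sup>2)"
    using assms by (intro continuous_intros) auto
qed simp

lemma integral_split_if_less:
  fixes f g :: "real \<Rightarrow> real"
  assumes "a \<le> c" "c \<le> b" "f integrable_on {a..c}" "g integrable_on {c..b}"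
  shows "integral {a..b} (\<lambda>z. if z < c then f z else g z) = integral {a..c} f + integral {c..b} g"
proof -
  have "((\<lambda>z. if z < c then f z else g z) has_integral integral {a..c} f) {a..c}"
    by (rule has_integral_spike_finite[of "{c}" _ _ f]) (use assms(3) in auto)
  moreover have "((\<lambda>z. if z < c then f z else g z) has_integral integral {c..b} g) {c..b}"
    by (rule has_integral_spike_finite[of "{}" _ _ g]) (use assms(4) in auto)
  ultimately show ?thesis
    using has_integral_combine[OF assms(1,2)] by (blast intro: integral_unique)
qed

lemma admissible_restrict:
  assumes "admissible ri ro H \<delta>\<sigma>" "0 \<le> a" "b \<le> H"
  shows "equilibrium_C1 ({ri..ro} \<times> {a..b}) \<delta>\<sigma>"
    and "\<forall>z\<in>{a..b}. \<forall>r\<in>{ri, ro}. \<delta>\<sigma> (r, z) $ 1 = 0 \<and> \<delta>\<sigma> (r, z) $ 4 = 0"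
proof -
  have "{ri..ro} \<times> {a..b} \<subseteq> {ri..ro} \<times> {0..H}"
    using assms(2,3) by auto
  with assms(1) show "equilibrium_C1 ({ri..ro} \<times> {a..b}) \<delta>\<sigma>"
    unfolding admissible_def by (blast intro: equilibrium_C1_subset)
  show "\<forall>z\<in>{a..b}. \<forall>r\<in>{ri, ro}. \<delta>\<sigma> (r, z) $ 1 = 0 \<and> \<delta>\<sigma> (r, z) $ 4 = 0"
    using assms unfolding admissible_def by auto
qed

lemma virtual_work_epsdot_sigma0:
  fixes \<delta>\<sigma> :: "real \<times> real \<Rightarrow> real^4"
  assumes "0 < ri" "ri \<le> ro" "0 < n" "a \<le> b"
    and eq: "equilibrium_C1 ({ri..ro} \<times> {a..b}) \<delta>\<sigma>"
    and free: "\<forall>z\<in>{a..b}. \<forall>r\<in>{ri, ro}. \<delta>\<sigma> (r, z) $ 1 = 0 \<and> \<delta>\<sigma> (r, z) $ 4 = 0"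
  shows "((\<lambda>r. integral {a..b} (\<lambda>z. (epsdot n (sigma0 ri ro p n r) \<bullet> \<delta>\<sigma> (r, z)) * r)) has_integral
          integral {ri..ro} (\<lambda>r. creep_coeff ri ro p n * (\<delta>\<sigma> (r, a) $ 4 - \<delta>\<sigma> (r, b) $ 4))) {ri..ro}"
proof -
  define c where "c = creep_coeff ri ro p n"
  have "C1_partials (\<lambda>x. - c / fst x) (\<lambda>x. c / (fst x)\<^sup>2) (\<lambda>x. 0) ({ri..ro} \<times> {a..b})"
    using C1_partials_divide_fst[of "{ri..ro} \<times> {a..b}" "- c"] \<open>0 < ri\<close> by auto
  note work = virtual_work_rectangle(3)[OF assms(1,2,4) eq free this C1_partials_const[of 0]]
  have face_work: "integral {ri..ro} (\<lambda>r. axial_face_work (\<lambda>x. - c / fst x) (\<lambda>x. 0) \<delta>\<sigma> (r, b)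
        - axial_face_work (\<lambda>x. - c / fst x) (\<lambda>x. 0) \<delta>\<sigma> (r, a))
      = integral {ri..ro} (\<lambda>r. c * (\<delta>\<sigma> (r, a) $ 4 - \<delta>\<sigma> (r, b) $ 4))"
    using \<open>0 < ri\<close> by (intro integral_cong) (simp add: axial_face_work_def field_simps)
  show ?thesis
    unfolding c_def[symmetric]
  proof (rule has_integral_eq[rotated, OF work[unfolded face_work]], rule integral_cong)
    fix r z
    assume "r \<in> {ri..ro}"
    with assms(1,3) show "(voigt_strain (\<lambda>x. - c / fst x) (\<lambda>x. c / (fst x)\<^sup>2) (\<lambda>x. 0) (\<lambda>x. 0) (\<lambda>x. 0) (r, z)
        \<bullet> \<delta>\<sigma> (r, z)) * r = (epsdot n (sigma0 ri ro p n r) \<bullet> \<delta>\<sigma> (r, z)) * r"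
      by (simp add: epsdot_sigma0 voigt_strain_def c_def inner_vec4 power2_eq_square)
  qed
qed

theorem mainTheorem2:
  fixes ri ro h H n p :: real
    and sm sp :: "real \<times> real \<Rightarrow> real^4"
    and urm uzm urp uzp :: "real \<times> real \<Rightarrow> real"
  assumes "0 < ri" "ri < ro" "0 < h" "h < H" "0 < n" "0 < p"
    and eqm: "equilibrium_C1 ({ri..ro} \<times> {0..h}) sm"
    and eqp: "equilibrium_C1 ({ri..ro} \<times> {h..H}) sp"
    and bcm: "\<forall>z\<in>{0..h}. \<forall>r\<in>{ri, ro}. sm (r, z) $ 1 = 0 \<and> sm (r, z) $ 4 = 0"
    and bcp: "\<forall>z\<in>{h..H}. \<forall>r\<in>{ri, ro}. sp (r, z) $ 1 = 0 \<and> sp (r, z) $ 4 = 0"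
    and bcm0: "\<forall>r\<in>{ri..ro}. sm (r, 0) $ 4 = 0"
    and bcpH: "\<forall>r\<in>{ri..ro}. sp (r, H) $ 4 = 0"
    and compm: "compatible ri ro p n ({ri..ro} \<times> {0..h}) urm uzm sm"
    and compp: "compatible ri ro p n ({ri..ro} \<times> {h..H}) urp uzp sp"
    and um0: "\<forall>r\<in>{ri..ro}. uzm (r, 0) = 0"
    and upH: "\<forall>r\<in>{ri..ro}. uzp (r, H) = 0"
    and iface: "\<forall>r\<in>{ri..ro}.
        sp (r, h) $ 4 = sm (r, h) $ 4 \<and> sp (r, h) $ 3 = sm (r, h) $ 3 \<and>
        uzp (r, h) = uzm (r, h) \<and>
        urp (r, h) - urm (r, h) =
          (let ar = coef_ar ri ro p n
           in 3 powr ((n - 1) / 2) * ar * \<bar>ar\<bar> powr (n - 1) * n powr (- n)) / r"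
    and adm: "admissible ri ro H \<delta>\<sigma>"
  shows "integral {ri..ro} (\<lambda>r. integral {0..H} (\<lambda>z.
            ((if z < h then sm (r, z) else sp (r, z)) \<bullet> (compliance ri ro p n r *v \<delta>\<sigma> (r, z))) * r))
       = integral {ri..ro} (\<lambda>r. integral {0..h} (\<lambda>z.
            (epsdot n (sigma0 ri ro p n r) \<bullet> \<delta>\<sigma> (r, z)) * r))"
proof -
  define c where "c = creep_coeff ri ro p n"
  have "0 \<le> h" "h \<le> H" "ri \<le> ro"
    using assms(2-4) by auto
  note lower_restrict = admissible_restrict[OF adm order.refl \<open>h \<le> H\<close>]
  note lower = layer_virtual_work[OF assms(1,2,5,6) \<open>0 \<le> h\<close> compm lower_restrict]
  note upper = layer_virtual_work[OF assms(1,2,5,6) \<open>h \<le> H\<close> compp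
      admissible_restrict[OF adm \<open>0 \<le> h\<close> order.refl]]
  note creep = virtual_work_epsdot_sigma0[where p = p, OF assms(1) \<open>ri \<le> ro\<close> assms(5) \<open>0 \<le> h\<close>
      lower_restrict]
  have "integral {ri..ro} (\<lambda>r. integral {0..H} (\<lambda>z.
            ((if z < h then sm (r, z) else sp (r, z)) \<bullet> (compliance ri ro p n r *v \<delta>\<sigma> (r, z))) * r))
      = integral {ri..ro} (\<lambda>r. integral {0..h} (\<lambda>z. (sm (r, z) \<bullet> (compliance ri ro p n r *v \<delta>\<sigma> (r, z))) * r)
          + integral {h..H} (\<lambda>z. (sp (r, z) \<bullet> (compliance ri ro p n r *v \<delta>\<sigma> (r, z))) * r))"
    using \<open>0 \<le> h\<close> \<open>h \<le> H\<close> lower(1) upper(1)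
    by (intro integral_cong)
      (simp add: if_distrib[of "\<lambda>s. s * _"] if_distrib[of "\<lambda>s. s \<bullet> _"] integral_split_if_less)
  also have "\<dots> = integral {ri..ro} (\<lambda>r. axial_face_work urm uzm \<delta>\<sigma> (r, h) - axial_face_work urm uzm \<delta>\<sigma> (r, 0)
      + (axial_face_work urp uzp \<delta>\<sigma> (r, H) - axial_face_work urp uzp \<delta>\<sigma> (r, h)))"
    unfolding integral_add[OF lower(2) upper(2)]
    using has_integral_add[OF lower(3) upper(3)] by (rule integral_unique)
  also have "\<dots> = integral {ri..ro} (\<lambda>r. c * (\<delta>\<sigma> (r, 0) $ 4 - \<delta>\<sigma> (r, h) $ 4))"
  proof (rule integral_cong)
    fix r
    assume "r \<in> {ri..ro}"
    then have "0 < r" and face_values: "urp (r, h) = c / r + urm (r, h)" "uzp (r, h) = uzm (r, h)"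
      "uzm (r, 0) = 0" "uzp (r, H) = 0" "\<delta>\<sigma> (r, 0) $ 4 = 0" "\<delta>\<sigma> (r, H) $ 4 = 0"
      using assms(1) bspec[OF iface[folded creep_coeff_def c_def]] um0 upH adm
      by (auto simp: admissible_def diff_eq_eq)
    show "axial_face_work urm uzm \<delta>\<sigma> (r, h) - axial_face_work urm uzm \<delta>\<sigma> (r, 0)
        + (axial_face_work urp uzp \<delta>\<sigma> (r, H) - axial_face_work urp uzp \<delta>\<sigma> (r, h))
      = c * (\<delta>\<sigma> (r, 0) $ 4 - \<delta>\<sigma> (r, h) $ 4)"
      using \<open>0 < r\<close> by (simp add: axial_face_work_def face_values field_simps)
  qed
  also have "\<dots> = integral {ri..ro} (\<lambda>r. integral {0..h} (\<lambda>z. (epsdot n (sigma0 ri ro p n r) \<bullet> \<delta>\<sigma> (r, z)) * r))"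
    unfolding c_def using integral_unique[OF creep] by (rule sym)
  finally show ?thesis .
qed

end
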